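(* Let $G$ be a locally nilpotent group and $A$ a normal abelian subgroup of $G$ with $G/A$ finite. Suppose that $G$ has a proper contranormal subgroup $C$. Then there exist a subgroup $B\le A$ which is normal in $G$ and a finitely generated subgroup $K$ with $G=AK$ such that $C=BK$ and $A=B[K,A]$. In particular, the factor group $G/B$ has the finite contranormal subgroup $KB/B$.
   Context: A subgroup $H$ of a group $G$ is called contranormal in $G$ if $H^G = G$, where $H^G$ denotes the normal closure of $H$ in $G$ (the smallest normal subgroup of $G$ containing $H$). *)

theory Defs
  imports "HOL-Algebra.Algebra"
begin

definition comm_subgroup :: "('a, 'b) monoid_scheme \<Rightarrow> 'a set \<Rightarrow> 'a set \<Rightarrow> 'a set" where
  "comm_subgroup G H K = generate G
     {inv\<^bsub>G\<^esub> h \<otimes>\<^bsub>G\<^esub> inv\<^bsub>G\<^esub> k \<otimes>\<^bsub>G\<^esub> h \<otimes>\<^bsub>G\<^esub> k | h k. h \<in> H \<and> k \<in> K}"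

text \<open>Lower central series: gamma_1 = G, gamma_(i+1) = [gamma_i, G] (indexed from 0).\<close>
fun lower_central :: "('a, 'b) monoid_scheme \<Rightarrow> nat \<Rightarrow> 'a set" where
  "lower_central G 0 = carrier G"
| "lower_central G (Suc n) = comm_subgroup G (lower_central G n) (carrier G)"

definition nilpotent_group :: "('a, 'b) monoid_scheme \<Rightarrow> bool" where
  "nilpotent_group G \<longleftrightarrow> group G \<and> (\<exists>n. lower_central G n = {\<one>\<^bsub>G\<^esub>})"

definition locally_nilpotent :: "('a, 'b) monoid_scheme \<Rightarrow> bool" where
  "locally_nilpotent G \<longleftrightarrow> group G \<and>
     (\<forall>S. finite S \<and> S \<subseteq> carrier G \<longrightarrow> nilpotent_group (subgroup_generated G S))"

definition finitely_generated_subgroup :: "('a, 'b) monoid_scheme \<Rightarrow> 'a set \<Rightarrow> bool" where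
  "finitely_generated_subgroup G K \<longleftrightarrow> (\<exists>S. finite S \<and> S \<subseteq> carrier G \<and> K = generate G S)"

definition normal_closure :: "('a, 'b) monoid_scheme \<Rightarrow> 'a set \<Rightarrow> 'a set" where
  "normal_closure G H = \<Inter> {N. N \<lhd> G \<and> H \<subseteq> N}"

definition contranormal :: "('a, 'b) monoid_scheme \<Rightarrow> 'a set \<Rightarrow> bool" where
  "contranormal G H \<longleftrightarrow> subgroup H G \<and> normal_closure G H = carrier G"

definition abelian_subgroup :: "('a, 'b) monoid_scheme \<Rightarrow> 'a set \<Rightarrow> bool" where
  "abelian_subgroup G A \<longleftrightarrow> subgroup A G \<and> (\<forall>a\<in>A. \<forall>b\<in>A. a \<otimes>\<^bsub>G\<^esub> b = b \<otimes>\<^bsub>G\<^esub> a)"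

end

(*
  Since G/A is finite, G = AH for a subgroup H generated by finitely many coset
  representatives of A, so H is nilpotent. A nilpotent group has no proper contranormal
  subgroup C: inductively G = C gamma_n, and then C gamma_(n+1) is normalised by C and by
  gamma_n, hence normal, hence all of G. For D = AC, a normal subgroup N of H containing
  D \<inter> H gives the normal subgroup AN of G containing C, so AN = G and N = H; thus
  D \<inter> H is contranormal in H, whence H <= D and G = AC. Hence the coset representatives
  can be chosen in C; they generate K <= C with G = AK. As A is abelian, B = C \<inter> A is normal
  in G = AK, and Dedekind's modular law gives C = BK. The normal subgroup C[K,A] contains C,
  so it is G, and the modular law gives A = B[K,A]. Finally, contranormality passes to the
  quotient G/B, and KB/B is finite since K is contained in B times a finite set.
*)

theory Submission
  imports Defs
begin

section \<open>Products of subgroups\<close>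

lemma mem_set_mult_iff: "x \<in> H <#>\<^bsub>G\<^esub> K \<longleftrightarrow> (\<exists>h\<in>H. \<exists>k\<in>K. x = h \<otimes>\<^bsub>G\<^esub> k)"
  by (auto simp: set_mult_def)

lemma (in group) inv_cancel_left [simp]:
  "g \<in> carrier G \<Longrightarrow> x \<in> carrier G \<Longrightarrow> inv g \<otimes> (g \<otimes> x) = x"
  "g \<in> carrier G \<Longrightarrow> x \<in> carrier G \<Longrightarrow> g \<otimes> (inv g \<otimes> x) = x"
  by (simp_all add: m_assoc [symmetric])

lemma (in group) normal_invI_set_mult:
  assumes "subgroup N G" and "carrier G = U <#> V" and "U \<subseteq> carrier G" "V \<subseteq> carrier G"
    and "\<And>x n. x \<in> U \<Longrightarrow> n \<in> N \<Longrightarrow> x \<otimes> n \<otimes> inv x \<in> N"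
    and "\<And>y n. y \<in> V \<Longrightarrow> n \<in> N \<Longrightarrow> y \<otimes> n \<otimes> inv y \<in> N"
  shows "N \<lhd> G"
  unfolding normal_inv_iff
proof (intro conjI ballI)
  fix g n assume g: "g \<in> carrier G" and n: "n \<in> N"
  then obtain x y where x: "x \<in> U" and y: "y \<in> V" and "g = x \<otimes> y"
    using assms(2) by (auto simp: mem_set_mult_iff)
  moreover have "x \<in> carrier G" "y \<in> carrier G" "n \<in> carrier G"
    using x y assms(3,4) subgroup.mem_carrier[OF assms(1) n] by auto
  ultimately have "g \<otimes> n \<otimes> inv g = x \<otimes> (y \<otimes> n \<otimes> inv y) \<otimes> inv x"
    by (simp add: m_assoc inv_mult_group)
  then show "g \<otimes> n \<otimes> inv g \<in> N"
    using assms(5,6) x y n by simp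
qed fact

lemma (in group) subgroup_Int_set_mult:
  assumes "subgroup H G" and "subgroup C G" and "K \<subseteq> C"
  shows "C \<inter> (H <#> K) = (C \<inter> H) <#> K"
proof
  interpret H: subgroup H G by fact
  interpret C: subgroup C G by fact
  show "C \<inter> (H <#> K) \<subseteq> (C \<inter> H) <#> K"
  proof
    fix x assume "x \<in> C \<inter> (H <#> K)"
    then obtain h k where x: "x \<in> C" and h: "h \<in> H" and k: "k \<in> K" and xhk: "x = h \<otimes> k"
      by (auto simp: mem_set_mult_iff)
    have "k \<in> C"
      using k assms(3) by blast
    then have "h = x \<otimes> inv k"
      using h by (simp add: xhk m_assoc)
    then have "h \<in> C"
      using x \<open>k \<in> C\<close> by simp
    then show "x \<in> (C \<inter> H) <#> K"
      using xhk h k unfolding set_mult_def by blast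
  qed
  show "(C \<inter> H) <#> K \<subseteq> C \<inter> (H <#> K)"
    using assms(3) unfolding set_mult_def by (blast intro: C.m_closed)
qed

lemma (in group) rcos_image_set_mult:
  assumes "subgroup H G" and "K \<subseteq> carrier G"
  shows "(\<lambda>x. H #> x) ` (H <#> K) = (\<lambda>k. H #> k) ` K"
proof
  interpret H: subgroup H G by fact
  show "(\<lambda>x. H #> x) ` (H <#> K) \<subseteq> (\<lambda>k. H #> k) ` K"
  proof
    fix R assume "R \<in> (\<lambda>x. H #> x) ` (H <#> K)"
    then obtain h k where h: "h \<in> H" and k: "k \<in> K" and R: "R = H #> (h \<otimes> k)"
      by (auto simp: mem_set_mult_iff)
    have "H #> k = H #> (h \<otimes> k)"
      using h k assms by (intro repr_independence rcosI) auto
    then show "R \<in> (\<lambda>k. H #> k) ` K"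
      using R k by auto
  qed
  show "(\<lambda>k. H #> k) ` K \<subseteq> (\<lambda>x. H #> x) ` (H <#> K)"
  proof
    fix R assume "R \<in> (\<lambda>k. H #> k) ` K"
    then obtain k where "k \<in> K" "R = H #> (\<one> \<otimes> k)"
      using assms(2) by auto
    then show "R \<in> (\<lambda>x. H #> x) ` (H <#> K)"
      using H.one_closed unfolding set_mult_def by blast
  qed
qed

lemma (in normal) set_mult_normal:
  assumes K: "subgroup K G" and HK: "carrier G = H <#> K" and N: "subgroup N G"
    and conj: "\<And>k n. k \<in> K \<Longrightarrow> n \<in> N \<Longrightarrow> k \<otimes> n \<otimes> inv k \<in> N"
  shows "H <#> N \<lhd> G"
proof -
  interpret K: subgroup K G by (fact K)
  interpret N: subgroup N G by (fact N)
  interpret HN: second_isomorphism_grp H G N by unfold_locales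
  show ?thesis
  proof (rule normal_invI_set_mult[OF HN.normal_set_mult_subgroup HK subset K.subset])
    fix h p assume h: "h \<in> H" and "p \<in> H <#> N"
    then obtain a n where a: "a \<in> H" and n: "n \<in> N" and p: "p = a \<otimes> n"
      by (auto simp: mem_set_mult_iff)
    have "h \<otimes> p \<otimes> inv h = (h \<otimes> a \<otimes> (n \<otimes> inv h \<otimes> inv n)) \<otimes> n"
      using h a n by (simp add: p m_assoc)
    moreover have "h \<otimes> a \<otimes> (n \<otimes> inv h \<otimes> inv n) \<in> H"
      using h a n inv_op_closed2 by simp
    ultimately show "h \<otimes> p \<otimes> inv h \<in> H <#> N"
      using n unfolding set_mult_def by blast
  next
    fix k p assume k: "k \<in> K" and "p \<in> H <#> N"
    then obtain a n where a: "a \<in> H" and n: "n \<in> N" and p: "p = a \<otimes> n"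
      by (auto simp: mem_set_mult_iff)
    have "k \<otimes> p \<otimes> inv k = (k \<otimes> a \<otimes> inv k) \<otimes> (k \<otimes> n \<otimes> inv k)"
      using k a n by (simp add: p m_assoc)
    moreover have "k \<otimes> a \<otimes> inv k \<in> H" "k \<otimes> n \<otimes> inv k \<in> N"
      using k a n inv_op_closed2 conj by simp_all
    ultimately show "k \<otimes> p \<otimes> inv k \<in> H <#> N"
      unfolding set_mult_def by blast
  qed
qed

lemma (in normal) finite_index_transversal:
  assumes "finite (carrier (G Mod H))" and "U \<subseteq> carrier G" and "carrier G \<subseteq> H <#> U"
  obtains T where "T \<subseteq> U" and "finite T" and "carrier G = H <#> T"
proof -
  have "(\<lambda>x. H #> x) ` U \<subseteq> carrier (G Mod H)"
    using assms(2) by (auto simp: carrier_FactGroup)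
  then obtain T where T: "T \<subseteq> U" "finite T" and UT: "(\<lambda>x. H #> x) ` U = (\<lambda>t. H #> t) ` T"
    using finite_subset_image[OF finite_subset[OF _ assms(1)], of _ "\<lambda>x. H #> x" U]
    by (metis (no_types, lifting) equalityE)
  have "carrier G \<subseteq> H <#> T"
  proof
    fix g assume "g \<in> carrier G"
    then obtain h x where h: "h \<in> H" and x: "x \<in> U" and g: "g = h \<otimes> x"
      using assms(3) unfolding set_mult_def by blast
    obtain t where t: "t \<in> T" and "H #> x = H #> t"
      using UT x by (metis imageE imageI)
    moreover have "g \<in> H #> x"
      using g h x assms(2) by (auto intro: rcosI)
    ultimately show "g \<in> H <#> T"
      unfolding r_coset_def set_mult_def by blast
  qed
  moreover have "H <#> T \<subseteq> carrier G"
    using T assms(2) by (intro setmult_subset_G) auto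
  ultimately show ?thesis
    using that T by blast
qed

section \<open>Commutator subgroups and the lower central series\<close>

lemma (in group) generate_conj_closed:
  assumes "g \<in> carrier G" and "S \<subseteq> carrier G"
    and "\<And>s. s \<in> S \<Longrightarrow> g \<otimes> s \<otimes> inv g \<in> generate G S"
    and "x \<in> generate G S"
  shows "g \<otimes> x \<otimes> inv g \<in> generate G S"
  using assms(4)
proof (induction rule: generate.induct)
  case one
  then show ?case
    using assms(1) generate.one by simp
next
  case (incl s)
  then show ?case by (fact assms(3))
next
  case (inv s)
  then have "s \<in> carrier G"
    using assms(2) by blast
  then have "g \<otimes> inv s \<otimes> inv g = inv (g \<otimes> s \<otimes> inv g)"
    using assms(1) by (simp add: m_assoc inv_mult_group)
  then show ?case
    using generate_m_inv_closed[OF assms(2) assms(3)[OF inv]] by simp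
next
  case (eng x y)
  then have "x \<in> carrier G" "y \<in> carrier G"
    using generate_in_carrier assms(2) by blast+
  then have "g \<otimes> (x \<otimes> y) \<otimes> inv g = (g \<otimes> x \<otimes> inv g) \<otimes> (g \<otimes> y \<otimes> inv g)"
    using assms(1) by (simp add: m_assoc)
  then show ?case
    using eng.IH generate.eng by metis
qed

lemma (in group) comm_subgroup_normal:
  assumes H: "subgroup H G" and K: "subgroup K G" and KH: "carrier G = K <#> H"
  shows "comm_subgroup G H K \<lhd> G"
proof -
  interpret H: subgroup H G by (fact H)
  interpret K: subgroup K G by (fact K)
  define \<Gamma> where "\<Gamma> = {inv h \<otimes> inv k \<otimes> h \<otimes> k | h k. h \<in> H \<and> k \<in> K}"
  have \<Gamma>: "\<Gamma> \<subseteq> carrier G"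
    unfolding \<Gamma>_def by auto
  have gen: "inv h \<otimes> inv k \<otimes> h \<otimes> k \<in> generate G \<Gamma>" if "h \<in> H" "k \<in> K" for h k
    unfolding \<Gamma>_def using that by (blast intro: generate.incl)
  have gen_inv: "inv x \<in> generate G \<Gamma>" if "x \<in> generate G \<Gamma>" for x
    using generate_m_inv_closed[OF \<Gamma> that] .
  show ?thesis
    unfolding comm_subgroup_def \<Gamma>_def[symmetric]
  proof (rule normal_invI_set_mult[OF generate_is_subgroup[OF \<Gamma>] KH K.subset H.subset])
    fix g x assume g: "g \<in> K" and x: "x \<in> generate G \<Gamma>"
    show "g \<otimes> x \<otimes> inv g \<in> generate G \<Gamma>"
    proof (rule generate_conj_closed[OF _ \<Gamma> _ x])
      fix s assume "s \<in> \<Gamma>"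
      then obtain h k where h: "h \<in> H" and k: "k \<in> K" and s: "s = inv h \<otimes> inv k \<otimes> h \<otimes> k"
        unfolding \<Gamma>_def by blast
      have "g \<otimes> s \<otimes> inv g = inv (inv h \<otimes> inv (inv g) \<otimes> h \<otimes> inv g)
          \<otimes> (inv h \<otimes> inv (k \<otimes> inv g) \<otimes> h \<otimes> (k \<otimes> inv g))"
        using g h k by (simp add: s m_assoc inv_mult_group)
      moreover have "inv h \<otimes> inv (inv g) \<otimes> h \<otimes> inv g \<in> generate G \<Gamma>"
        and "inv h \<otimes> inv (k \<otimes> inv g) \<otimes> h \<otimes> (k \<otimes> inv g) \<in> generate G \<Gamma>"
        using g h k by (intro gen; simp)+
      ultimately show "g \<otimes> s \<otimes> inv g \<in> generate G \<Gamma>"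
        by (metis gen_inv generate.eng)
    qed (use g in simp)
  next
    fix g x assume g: "g \<in> H" and x: "x \<in> generate G \<Gamma>"
    show "g \<otimes> x \<otimes> inv g \<in> generate G \<Gamma>"
    proof (rule generate_conj_closed[OF _ \<Gamma> _ x])
      fix s assume "s \<in> \<Gamma>"
      then obtain h k where h: "h \<in> H" and k: "k \<in> K" and s: "s = inv h \<otimes> inv k \<otimes> h \<otimes> k"
        unfolding \<Gamma>_def by blast
      have "g \<otimes> s \<otimes> inv g = (inv (h \<otimes> inv g) \<otimes> inv k \<otimes> (h \<otimes> inv g) \<otimes> k)
          \<otimes> inv (inv (inv g) \<otimes> inv k \<otimes> inv g \<otimes> k)"
        using g h k by (simp add: s m_assoc inv_mult_group)
      moreover have "inv (h \<otimes> inv g) \<otimes> inv k \<otimes> (h \<otimes> inv g) \<otimes> k \<in> generate G \<Gamma>"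
        and "inv (inv g) \<otimes> inv k \<otimes> inv g \<otimes> k \<in> generate G \<Gamma>"
        using g h k by (intro gen; simp)+
      ultimately show "g \<otimes> s \<otimes> inv g \<in> generate G \<Gamma>"
        by (metis gen_inv generate.eng)
    qed (use g in simp)
  qed
qed

lemma (in group) lower_central_normal: "lower_central G n \<lhd> G"
proof (induction n)
  case 0
  show ?case
    using normal_self by simp
next
  case (Suc n)
  then interpret L: normal "lower_central G n" G .
  show ?case
    unfolding lower_central.simps comm_subgroup_def
  proof (rule normal_generateI)
    fix c g
    assume "c \<in> {inv x \<otimes> inv y \<otimes> x \<otimes> y | x y. x \<in> lower_central G n \<and> y \<in> carrier G}"
      and g: "g \<in> carrier G"
    then obtain x y where c: "c = inv x \<otimes> inv y \<otimes> x \<otimes> y"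
      and x: "x \<in> lower_central G n" and y: "y \<in> carrier G"
      by blast
    have "g \<otimes> c \<otimes> inv g = inv (g \<otimes> x \<otimes> inv g) \<otimes> inv (g \<otimes> y \<otimes> inv g)
        \<otimes> (g \<otimes> x \<otimes> inv g) \<otimes> (g \<otimes> y \<otimes> inv g)"
      using x y g by (simp add: c m_assoc inv_mult_group)
    moreover have "g \<otimes> x \<otimes> inv g \<in> lower_central G n"
      using L.inv_op_closed2 g x .
    ultimately show "g \<otimes> c \<otimes> inv g
        \<in> {inv x \<otimes> inv y \<otimes> x \<otimes> y | x y. x \<in> lower_central G n \<and> y \<in> carrier G}"
      using g y by blast
  qed auto
qed

lemma (in group) lower_central_commutator:
  assumes "x \<in> lower_central G n" and "y \<in> carrier G"
  shows "inv x \<otimes> inv y \<otimes> x \<otimes> y \<in> lower_central G (Suc n)"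
  using assms unfolding lower_central.simps comm_subgroup_def by (blast intro: generate.incl)

section \<open>Contranormal subgroups\<close>

lemma (in group) contranormal_iff:
  "contranormal G C \<longleftrightarrow> subgroup C G \<and> (\<forall>N. N \<lhd> G \<and> C \<subseteq> N \<longrightarrow> N = carrier G)"
proof -
  have "normal_closure G C = carrier G \<longleftrightarrow> (\<forall>N. N \<lhd> G \<and> C \<subseteq> N \<longrightarrow> N = carrier G)"
    if C: "subgroup C G"
  proof
    assume closure: "normal_closure G C = carrier G"
    show "\<forall>N. N \<lhd> G \<and> C \<subseteq> N \<longrightarrow> N = carrier G"
    proof (intro allI impI)
      fix N assume N: "N \<lhd> G \<and> C \<subseteq> N"
      then have "carrier G \<subseteq> N"
        using closure unfolding normal_closure_def by blast
      moreover have "N \<subseteq> carrier G"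
        using N normal_imp_subgroup subgroup.subset by blast
      ultimately show "N = carrier G" by blast
    qed
  next
    assume "\<forall>N. N \<lhd> G \<and> C \<subseteq> N \<longrightarrow> N = carrier G"
    moreover have "carrier G \<lhd> G \<and> C \<subseteq> carrier G"
      using normal_self subgroup.subset[OF C] by blast
    ultimately have "{N. N \<lhd> G \<and> C \<subseteq> N} = {carrier G}"
      by blast
    then show "normal_closure G C = carrier G"
      unfolding normal_closure_def by simp
  qed
  then show ?thesis
    unfolding contranormal_def by blast
qed

lemma (in group) contranormalD:
  assumes "contranormal G C"
  shows "subgroup C G" and "N \<lhd> G \<Longrightarrow> C \<subseteq> N \<Longrightarrow> N = carrier G"
  using assms unfolding contranormal_iff by blast+

lemma contranormal_hom_image:
  fixes G (structure) and H (structure)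
  assumes "group_hom G H h" and "h ` carrier G = carrier H" and "contranormal G C"
  shows "contranormal H (h ` C)"
proof -
  interpret group_hom G H h by fact
  have C: "subgroup C G" and maximal: "\<And>N. N \<lhd> G \<Longrightarrow> C \<subseteq> N \<Longrightarrow> N = carrier G"
    using G.contranormalD[OF assms(3)] by blast+
  show ?thesis
    unfolding H.contranormal_iff
  proof (intro conjI allI impI)
    show "subgroup (h ` C) H"
      using subgroup_img_is_subgroup[OF C] .
    fix N assume "N \<lhd> H \<and> h ` C \<subseteq> N"
    then have N: "N \<lhd> H" and CN: "h ` C \<subseteq> N"
      by auto
    interpret N: normal N H by (fact N)
    define P where "P = {g \<in> carrier G. h g \<in> N}"
    have "subgroup P G"
      unfolding P_def
    proof (rule G.subgroupI)
      show "{g \<in> carrier G. h g \<in> N} \<noteq> {}"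
        using N.one_closed G.one_closed by force
    next
      fix g assume "g \<in> {g \<in> carrier G. h g \<in> N}"
      then show "inv g \<in> {g \<in> carrier G. h g \<in> N}"
        using N.m_inv_closed by simp
    next
      fix g g' assume "g \<in> {g \<in> carrier G. h g \<in> N}" and "g' \<in> {g \<in> carrier G. h g \<in> N}"
      then show "g \<otimes> g' \<in> {g \<in> carrier G. h g \<in> N}"
        using N.m_closed by simp
    qed blast
    moreover have "g \<otimes> p \<otimes> inv g \<in> P" if "g \<in> carrier G" and "p \<in> P" for g p
    proof -
      have "h (g \<otimes> p \<otimes> inv g) = h g \<otimes>\<^bsub>H\<^esub> h p \<otimes>\<^bsub>H\<^esub> inv\<^bsub>H\<^esub> h g"
        using that unfolding P_def by simp
      also have "\<dots> \<in> N"
        using that N.inv_op_closed2 unfolding P_def by simp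
      finally show ?thesis
        using that unfolding P_def by simp
    qed
    ultimately have "P \<lhd> G"
      unfolding G.normal_inv_iff by blast
    moreover have "C \<subseteq> P"
      unfolding P_def using CN subgroup.subset[OF C] by blast
    ultimately have "P = carrier G"
      by (rule maximal)
    have "carrier H \<subseteq> N"
    proof
      fix y assume "y \<in> carrier H"
      then obtain g where "g \<in> carrier G" and "y = h g"
        using assms(2) by (metis imageE)
      then show "y \<in> N"
        using \<open>P = carrier G\<close> unfolding P_def by blast
    qed
    then show "N = carrier H"
      using N.subset by blast
  qed
qed

lemma contranormal_nilpotent_eq_carrier:
  fixes G (structure)
  assumes "nilpotent_group G" and "contranormal G C"
  shows "C = carrier G"
proof -
  interpret group G
    using assms(1) unfolding nilpotent_group_def by blast
  have C: "subgroup C G" and maximal: "\<And>N. N \<lhd> G \<Longrightarrow> C \<subseteq> N \<Longrightarrow> N = carrier G"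
    using contranormalD[OF assms(2)] by blast+
  interpret C: subgroup C G by (fact C)
  have "carrier G = lower_central G n <#> C" for n
  proof (induction n)
    case 0
    show ?case
      using set_mult_carrier_idem[OF C] by simp
  next
    case (Suc n)
    let ?L = "lower_central G n" and ?N = "lower_central G (Suc n)"
    interpret L: normal ?L G by (rule lower_central_normal)
    interpret N: normal ?N G by (rule lower_central_normal)
    interpret NC: second_isomorphism_grp ?N G C by unfold_locales
    have "?N <#> C \<lhd> G"
    proof (rule normal_invI_set_mult[OF NC.normal_set_mult_subgroup Suc.IH L.subset C.subset])
      fix x p assume x: "x \<in> ?L" and "p \<in> ?N <#> C"
      then obtain y c where y: "y \<in> ?N" and c: "c \<in> C" and p: "p = y \<otimes> c"
        by (auto simp: mem_set_mult_iff)
      have "x \<otimes> p \<otimes> inv x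
          = (x \<otimes> y \<otimes> inv x) \<otimes> (inv (inv x) \<otimes> inv (inv c) \<otimes> inv x \<otimes> inv c) \<otimes> c"
        using x y c by (simp add: p m_assoc)
      moreover have "inv (inv x) \<otimes> inv (inv c) \<otimes> inv x \<otimes> inv c \<in> ?N"
        using x c by (intro lower_central_commutator) auto
      then have "(x \<otimes> y \<otimes> inv x) \<otimes> (inv (inv x) \<otimes> inv (inv c) \<otimes> inv x \<otimes> inv c) \<in> ?N"
        using N.m_closed[OF N.inv_op_closed2[OF L.mem_carrier[OF x] y]] by blast
      ultimately show "x \<otimes> p \<otimes> inv x \<in> ?N <#> C"
        using c unfolding set_mult_def by blast
    next
      fix c p assume c: "c \<in> C" and "p \<in> ?N <#> C"
      then obtain y d where y: "y \<in> ?N" and d: "d \<in> C" and p: "p = y \<otimes> d"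
        by (auto simp: mem_set_mult_iff)
      have "c \<otimes> p \<otimes> inv c = (c \<otimes> y \<otimes> inv c) \<otimes> (c \<otimes> d \<otimes> inv c)"
        using c y d by (simp add: p m_assoc)
      moreover have "c \<otimes> y \<otimes> inv c \<in> ?N" "c \<otimes> d \<otimes> inv c \<in> C"
        using N.inv_op_closed2 c y d by simp_all
      ultimately show "c \<otimes> p \<otimes> inv c \<in> ?N <#> C"
        unfolding set_mult_def by blast
    qed
    then show ?case
      using maximal NC.S_contained_in_set_mult by metis
  qed
  moreover obtain n where "lower_central G n = {\<one>}"
    using assms(1) unfolding nilpotent_group_def by blast
  ultimately have "carrier G = {\<one>} <#> C"
    by metis
  then show ?thesis
    by (auto simp: set_mult_def)
qed

lemma (in group) normal_in_subgroupD:
  assumes K: "subgroup K G" and N: "N \<lhd> G\<lparr>carrier := K\<rparr>"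
  shows "subgroup N G" and "N \<subseteq> K"
    and "\<And>k n. k \<in> K \<Longrightarrow> n \<in> N \<Longrightarrow> k \<otimes> n \<otimes> inv k \<in> N"
proof -
  interpret N: normal N "G\<lparr>carrier := K\<rparr>" by (fact N)
  show "subgroup N G"
    using incl_subgroup[OF K normal_imp_subgroup[OF N]] .
  show "N \<subseteq> K"
    using N.subset by simp
  fix k n assume "k \<in> K" and "n \<in> N"
  then show "k \<otimes> n \<otimes> inv k \<in> N"
    using N.inv_op_closed2[of k n] K by simp
qed

lemma (in normal) contranormal_set_mult_eq_carrier:
  assumes K: "subgroup K G" and nilpotent: "nilpotent_group (G\<lparr>carrier := K\<rparr>)"
    and HK: "carrier G = H <#> K" and C: "contranormal G C"
  shows "carrier G = H <#> C"
proof -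
  interpret K: subgroup K G by (fact K)
  have Cs: "subgroup C G" and maximal: "\<And>N. N \<lhd> G \<Longrightarrow> C \<subseteq> N \<Longrightarrow> N = carrier G"
    using contranormalD[OF C] by blast+
  interpret C: subgroup C G by (fact Cs)
  interpret HC: second_isomorphism_grp H G C by unfold_locales
  define D where "D = H <#> C"
  have D: "subgroup D G" and HD: "H \<subseteq> D" and CD: "C \<subseteq> D"
    unfolding D_def
    by (fact HC.normal_set_mult_subgroup HC.H_contained_in_set_mult HC.S_contained_in_set_mult)+
  interpret D: subgroup D G by (fact D)
  have "contranormal (G\<lparr>carrier := K\<rparr>) (D \<inter> K)"
    unfolding group.contranormal_iff[OF subgroup_imp_group[OF K]]
  proof (intro conjI allI impI)
    show "subgroup (D \<inter> K) (G\<lparr>carrier := K\<rparr>)"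
      using subgroup_incl[OF subgroups_Inter_pair[OF D K] K] by blast
    fix N assume "N \<lhd> G\<lparr>carrier := K\<rparr> \<and> D \<inter> K \<subseteq> N"
    then have N: "N \<lhd> G\<lparr>carrier := K\<rparr>" and DN: "D \<inter> K \<subseteq> N"
      by auto
    note N' = normal_in_subgroupD[OF K N]
    interpret N: subgroup N G by (fact N'(1))
    have "C \<subseteq> H <#> N"
    proof
      fix c assume c: "c \<in> C"
      then obtain h k where h: "h \<in> H" and k: "k \<in> K" and chk: "c = h \<otimes> k"
        using HK C.subset unfolding set_mult_def by blast
      have "k = inv h \<otimes> c"
        using h k by (simp add: chk)
      moreover have "inv h \<otimes> c \<in> D"
        using h c HD CD by blast
      ultimately have "k \<in> N"
        using k DN by blast
      then show "c \<in> H <#> N"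
        using h chk unfolding set_mult_def by blast
    qed
    then have HN: "H <#> N = carrier G"
      using maximal set_mult_normal[OF K HK N'(1,3)] by blast
    have "K \<subseteq> N"
    proof
      fix k assume k: "k \<in> K"
      then obtain h n where h: "h \<in> H" and n: "n \<in> N" and khn: "k = h \<otimes> n"
        using HN K.subset unfolding set_mult_def by blast
      have "h = k \<otimes> inv n"
        using h n by (simp add: khn m_assoc)
      moreover have "k \<otimes> inv n \<in> K"
        using k n N'(2) by blast
      ultimately have "h \<in> N"
        using h HD DN by blast
      then show "k \<in> N"
        using n khn by simp
    qed
    then show "N = carrier (G\<lparr>carrier := K\<rparr>)"
      using N'(2) by simp
  qed
  then have "K \<subseteq> D"
    using contranormal_nilpotent_eq_carrier[OF nilpotent] by force
  have "H <#> K \<subseteq> D"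
  proof
    fix x assume "x \<in> H <#> K"
    then obtain h k where "h \<in> H" "k \<in> K" "x = h \<otimes> k"
      by (auto simp: mem_set_mult_iff)
    then show "x \<in> D"
      using HD \<open>K \<subseteq> D\<close> by blast
  qed
  then show ?thesis
    using HK D.subset unfolding D_def by blast
qed

lemma (in normal) set_mult_generate_eq_carrier:
  assumes "S \<subseteq> carrier G" and "carrier G = H <#> S"
  shows "carrier G = H <#> generate G S"
proof
  have "S \<subseteq> generate G S"
    by (blast intro: generate.incl)
  then show "carrier G \<subseteq> H <#> generate G S"
    using assms(2) mono_set_mult[OF subset_refl] by metis
  show "H <#> generate G S \<subseteq> carrier G"
    using setmult_subset_G[OF subset generate_incl[OF assms(1)]] .
qed

lemma (in normal) contranormal_finite_transversal:
  assumes "locally_nilpotent G" and "finite (carrier (G Mod H))" and "contranormal G C"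
  obtains S where "finite S" and "S \<subseteq> C" and "carrier G = H <#> S"
proof -
  have C: "subgroup C G"
    using contranormalD(1)[OF assms(3)] .
  have "carrier G \<subseteq> H <#> carrier G"
  proof
    fix g assume g: "g \<in> carrier G"
    then have "g = \<one> \<otimes> g"
      by simp
    then show "g \<in> H <#> carrier G"
      using g subgroup.one_closed[OF subgroup_axioms] unfolding set_mult_def by blast
  qed
  then obtain T where T: "T \<subseteq> carrier G" "finite T" "carrier G = H <#> T"
    using finite_index_transversal[OF assms(2) subset_refl] by blast
  have "nilpotent_group (G\<lparr>carrier := generate G T\<rparr>)"
    using assms(1) T(1,2) unfolding locally_nilpotent_def subgroup_generated_def
    by (simp add: Int_absorb1)
  then have "carrier G = H <#> C"
    using contranormal_set_mult_eq_carrier[OF generate_is_subgroup[OF T(1)] _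
        set_mult_generate_eq_carrier[OF T(1,3)] assms(3)]
    by blast
  then show ?thesis
    using finite_index_transversal[OF assms(2) subgroup.subset[OF C]] that by blast
qed

lemma (in normal) contranormal_finitely_generated_supplement:
  assumes "locally_nilpotent G" and "finite (carrier (G Mod H))" and "contranormal G C"
  obtains K where "subgroup K G" and "finitely_generated_subgroup G K"
    and "K \<subseteq> C" and "carrier G = H <#> K"
proof -
  have C: "subgroup C G"
    using contranormalD(1)[OF assms(3)] .
  obtain S where S: "finite S" "S \<subseteq> C" "carrier G = H <#> S"
    using contranormal_finite_transversal[OF assms] .
  then have S_carrier: "S \<subseteq> carrier G"
    using subgroup.subset[OF C] by blast
  show ?thesis
  proof
    show "subgroup (generate G S) G"
      using generate_is_subgroup[OF S_carrier] .
    show "finitely_generated_subgroup G (generate G S)"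
      unfolding finitely_generated_subgroup_def using S(1) S_carrier by blast
    show "generate G S \<subseteq> C"
      using generate_subgroup_incl[OF S(2) C] .
    show "carrier G = H <#> generate G S"
      using set_mult_generate_eq_carrier[OF S_carrier S(3)] .
  qed
qed

section \<open>A contranormal subgroup containing a supplement of an abelian normal subgroup\<close>

locale contranormal_supplement = normal A G
  for A and G (structure) +
  fixes C K
  assumes abelian: "\<And>a b. a \<in> A \<Longrightarrow> b \<in> A \<Longrightarrow> a \<otimes> b = b \<otimes> a"
    and contranormal: "contranormal G C"
    and subgroup_K: "subgroup K G"
    and K_subset: "K \<subseteq> C"
    and supplement: "carrier G = A <#> K"
begin

lemma subgroup_C: "subgroup C G"
  using contranormalD(1)[OF contranormal] .

lemma Int_normal: "C \<inter> A \<lhd> G"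
proof -
  interpret C: subgroup C G by (rule subgroup_C)
  interpret K: subgroup K G by (rule subgroup_K)
  show ?thesis
  proof (rule normal_invI_set_mult[OF subgroups_Inter_pair[OF subgroup_C subgroup_axioms]
        supplement subset K.subset])
    fix a b assume a: "a \<in> A" and b: "b \<in> C \<inter> A"
    then have "a \<otimes> b \<otimes> inv a = b"
      using abelian[OF a, of b] by (simp add: m_assoc)
    then show "a \<otimes> b \<otimes> inv a \<in> C \<inter> A"
      using b by simp
  next
    fix k b assume k: "k \<in> K" and b: "b \<in> C \<inter> A"
    then have "k \<in> C"
      using K_subset by blast
    then have "k \<otimes> b \<otimes> inv k \<in> C"
      using b by (intro C.m_closed C.m_inv_closed) auto
    moreover have "k \<otimes> b \<otimes> inv k \<in> A"
      using k b inv_op_closed2 by simp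
    ultimately show "k \<otimes> b \<otimes> inv k \<in> C \<inter> A"
      by blast
  qed
qed

lemma eq_Int_set_mult: "C = (C \<inter> A) <#> K"
  using subgroup_Int_set_mult[OF subgroup_axioms subgroup_C K_subset]
    supplement subgroup.subset[OF subgroup_C]
  by (simp add: Int_absorb2)

lemma conj_mem_set_mult_comm_subgroup:
  assumes a: "a \<in> A" and c: "c \<in> C"
  shows "a \<otimes> c \<otimes> inv a \<in> C <#> comm_subgroup G K A"
proof -
  from c have "c \<in> (C \<inter> A) <#> K"
    by (simp only: eq_Int_set_mult[symmetric])
  then obtain b k where b: "b \<in> C \<inter> A" and k: "k \<in> K" and cbk: "c = b \<otimes> k"
    by (auto simp: mem_set_mult_iff)
  have kC: "k \<in> C" and kG: "k \<in> carrier G"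
    using k K_subset subgroup.subset[OF subgroup_K] by blast+
  have "a \<otimes> c \<otimes> inv a = (a \<otimes> b) \<otimes> k \<otimes> inv a"
    using a b kG by (simp add: cbk m_assoc)
  also have "\<dots> = b \<otimes> a \<otimes> k \<otimes> inv a"
    using abelian a b by simp
  also have "\<dots> = c \<otimes> (inv k \<otimes> inv (inv a) \<otimes> k \<otimes> inv a)"
    using a b kG by (simp add: cbk m_assoc)
  finally have "a \<otimes> c \<otimes> inv a = c \<otimes> (inv k \<otimes> inv (inv a) \<otimes> k \<otimes> inv a)" .
  moreover have "inv k \<otimes> inv (inv a) \<otimes> k \<otimes> inv a \<in> comm_subgroup G K A"
    unfolding comm_subgroup_def using k a by (blast intro: generate.incl)
  ultimately show ?thesis
    using c unfolding set_mult_def by blast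
qed

lemma eq_Int_set_mult_comm_subgroup: "A = (C \<inter> A) <#> comm_subgroup G K A"
proof -
  interpret C: subgroup C G by (rule subgroup_C)
  interpret K: subgroup K G by (rule subgroup_K)
  define D where "D = comm_subgroup G K A"
  have D: "D \<lhd> G"
    unfolding D_def using comm_subgroup_normal[OF subgroup_K subgroup_axioms supplement] .
  interpret D: normal D G by (fact D)
  have "inv k \<otimes> inv a \<otimes> k \<otimes> a \<in> A" if "k \<in> K" and "a \<in> A" for k a
  proof -
    have "inv k \<otimes> inv a \<otimes> k \<in> A"
      using that subgroup.subset[OF subgroup_K] by (intro inv_op_closed1) auto
    then show ?thesis
      using subgroup.m_closed[OF subgroup_axioms _ \<open>a \<in> A\<close>] by blast
  qed
  then have DA: "D \<subseteq> A"
    unfolding D_def comm_subgroup_def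
    by (intro generate_subgroup_incl[OF _ subgroup_axioms]) blast
  interpret DC: second_isomorphism_grp D G C by unfold_locales
  have M: "subgroup (C <#> D) G"
    using DC.normal_set_mult_subgroup commut_normal[OF subgroup_C D] by simp
  have M_mult: "x \<otimes> y \<in> C <#> D" if "x \<in> C <#> D" "y \<in> C <#> D" for x y
    using subgroup.m_closed[OF M that] .
  have CM: "C \<subseteq> C <#> D" and DM: "D \<subseteq> C <#> D"
    using DC.S_contained_in_set_mult DC.H_contained_in_set_mult commut_normal[OF subgroup_C D]
    by simp_all
  have "C <#> D \<lhd> G"
  proof (rule normal_invI_set_mult[OF M supplement subset K.subset])
    fix a p assume a: "a \<in> A" and "p \<in> C <#> D"
    then obtain c d where c: "c \<in> C" and d: "d \<in> D" and p: "p = c \<otimes> d"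
      by (auto simp: mem_set_mult_iff)
    have "a \<otimes> p \<otimes> inv a = (a \<otimes> c \<otimes> inv a) \<otimes> (a \<otimes> d \<otimes> inv a)"
      using a c d by (simp add: p m_assoc)
    moreover have "a \<otimes> c \<otimes> inv a \<in> C <#> D"
      unfolding D_def using conj_mem_set_mult_comm_subgroup[OF a c] .
    moreover have "a \<otimes> d \<otimes> inv a \<in> C <#> D"
      using DM D.inv_op_closed2[OF mem_carrier[OF a] d] by blast
    ultimately show "a \<otimes> p \<otimes> inv a \<in> C <#> D"
      using M_mult by simp
  next
    fix k p assume k: "k \<in> K" and "p \<in> C <#> D"
    then obtain c d where c: "c \<in> C" and d: "d \<in> D" and p: "p = c \<otimes> d"
      by (auto simp: mem_set_mult_iff)
    have "k \<in> C"
      using k K_subset by blast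
    have "k \<otimes> p \<otimes> inv k = (k \<otimes> c \<otimes> inv k) \<otimes> (k \<otimes> d \<otimes> inv k)"
      using k c d by (simp add: p m_assoc)
    moreover have "k \<otimes> c \<otimes> inv k \<in> C"
      using \<open>k \<in> C\<close> c by (intro C.m_closed C.m_inv_closed)
    moreover have "k \<otimes> d \<otimes> inv k \<in> D"
      using k d D.inv_op_closed2 by simp
    ultimately show "k \<otimes> p \<otimes> inv k \<in> C <#> D"
      unfolding set_mult_def by blast
  qed
  then have "C <#> D = carrier G"
    by (rule contranormalD(2)[OF contranormal _ CM])
  then have "A = A \<inter> (C <#> D)"
    using subset by (simp add: Int_absorb2)
  also have "\<dots> = (A \<inter> C) <#> D"
    by (rule subgroup_Int_set_mult[OF subgroup_C subgroup_axioms DA])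
  finally show ?thesis
    unfolding D_def by (simp only: Int_commute)
qed

lemma contranormal_quotient_image:
  "contranormal (G Mod (C \<inter> A)) ((\<lambda>k. (C \<inter> A) #> k) ` K)"
proof -
  interpret B: normal "C \<inter> A" G by (rule Int_normal)
  have "group_hom G (G Mod (C \<inter> A)) (\<lambda>x. (C \<inter> A) #> x)"
    using B.r_coset_hom_Mod B.factorgroup_is_group
    by (simp add: group_hom_def group_hom_axioms_def is_group)
  moreover have "(\<lambda>x. (C \<inter> A) #> x) ` carrier G = carrier (G Mod (C \<inter> A))"
    by (simp add: carrier_FactGroup)
  ultimately have "contranormal (G Mod (C \<inter> A)) ((\<lambda>x. (C \<inter> A) #> x) ` C)"
    using contranormal_hom_image contranormal by blast
  moreover have "(\<lambda>x. (C \<inter> A) #> x) ` C = (\<lambda>x. (C \<inter> A) #> x) ` ((C \<inter> A) <#> K)"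
    using eq_Int_set_mult by (rule arg_cong)
  ultimately show ?thesis
    using rcos_image_set_mult[OF B.subgroup_axioms subgroup.subset[OF subgroup_K]] by metis
qed

lemma finite_quotient_image:
  assumes "finite (carrier (G Mod A))"
  shows "finite ((\<lambda>k. (C \<inter> A) #> k) ` K)"
proof -
  interpret B: normal "C \<inter> A" G by (rule Int_normal)
  interpret K: subgroup K G by (rule subgroup_K)
  obtain S where S: "S \<subseteq> K" "finite S" "carrier G = A <#> S"
    using finite_index_transversal[OF assms K.subset equalityD1[OF supplement]] .
  then have SG: "S \<subseteq> carrier G"
    using K.subset by blast
  have "K = (K \<inter> A) <#> S"
    using subgroup_Int_set_mult[OF subgroup_axioms subgroup_K S(1)] S(3) K.subset
    by (simp add: Int_absorb2)
  also have "\<dots> \<subseteq> (C \<inter> A) <#> S"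
    using K_subset by (intro mono_set_mult) auto
  finally have "(\<lambda>k. (C \<inter> A) #> k) ` K \<subseteq> (\<lambda>s. (C \<inter> A) #> s) ` S"
    using rcos_image_set_mult[OF B.subgroup_axioms SG] by blast
  then show ?thesis
    using S(2) finite_surj by blast
qed

end

theorem propositionB:
  fixes G (structure) and A C :: "'a set"
  assumes "locally_nilpotent G"
    and "A \<lhd> G" and "abelian_subgroup G A"
    and "finite (carrier (G Mod A))"
    and "contranormal G C" and "C \<noteq> carrier G"
  shows "\<exists>B K. B \<subseteq> A \<and> B \<lhd> G \<and> subgroup K G \<and> finitely_generated_subgroup G K
           \<and> carrier G = A <#> K \<and> C = B <#> K \<and> A = B <#> comm_subgroup G K A
           \<and> finite ((\<lambda>k. B #> k) ` K)
           \<and> contranormal (G Mod B) ((\<lambda>k. B #> k) ` K)"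
proof -
  interpret normal A G by (fact assms(2))
  obtain K where K: "subgroup K G" "finitely_generated_subgroup G K" "K \<subseteq> C" "carrier G = A <#> K"
    using contranormal_finitely_generated_supplement[OF assms(1,4,5)] .
  have "contranormal_supplement A G C K"
    using assms(3) unfolding abelian_subgroup_def
    by (intro contranormal_supplement.intro contranormal_supplement_axioms.intro assms(2,5) K(1,3,4))
      blast
  then interpret contranormal_supplement A G C K .
  show ?thesis
    using K Int_normal eq_Int_set_mult eq_Int_set_mult_comm_subgroup
      finite_quotient_image[OF assms(4)] contranormal_quotient_image
    by (intro exI[of _ "C \<inter> A"] exI[of _ K]) blast
qed

end
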